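(* Let $V=\mathbb{C}^6$ with basis $e_0,\dots,e_5$. Every projective line $\ell\subset\mathbb{P}(\wedge^2 V)$ all of whose points have rank exactly four is $PGL_6$-equivalent either to the line $\ell_g$ spanned by $e_0\wedge e_2+e_1\wedge e_3$ and $e_0\wedge e_4+e_1\wedge e_5$, or to the line $\ell_s$ spanned by $e_0\wedge e_2+e_1\wedge e_3$ and $e_0\wedge e_4+e_1\wedge e_2$.
   Context: Elements of $\wedge^2\mathbb{C}^6$ are identified with skew-symmetric $6\times6$ matrices, and the rank of a tensor is the rank of the corresponding matrix (so rank $2$ means decomposable). $PGL_6$ acts naturally on $\mathbb{P}(\wedge^2\mathbb{C}^6)\simeq\mathbb{P}^{14}$. Work over $\mathbb{C}$. *)

theory Defs
  imports "HOL-Analysis.Analysis" "HOL-Library.Numeral_Type"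
begin

text \<open>Elements of wedge^2 C^6 as skew-symmetric 6x6 complex matrices, indexed by type 6 = {0..5}.\<close>

definition skew :: "complex^6^6 \<Rightarrow> bool" where
  "skew M \<longleftrightarrow> transpose M = - M"

definition wedge :: "6 \<Rightarrow> 6 \<Rightarrow> complex^6^6" where
  "wedge i j = (\<chi> a b. (if a = i \<and> b = j then 1 else 0) - (if a = j \<and> b = i then 1 else 0))"

definition lin2 :: "complex \<Rightarrow> complex^6^6 \<Rightarrow> complex \<Rightarrow> complex^6^6 \<Rightarrow> complex^6^6" where
  "lin2 a A b B = (\<chi> i j. a * A$i$j + b * B$i$j)"

text \<open>The (affine cone over the) projective line spanned by A and B: their complex linear span.\<close>
definition pline :: "complex^6^6 \<Rightarrow> complex^6^6 \<Rightarrow> (complex^6^6) set" where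
  "pline A B = {lin2 a A b B | a b. True}"

definition act :: "complex^6^6 \<Rightarrow> complex^6^6 \<Rightarrow> complex^6^6" where
  "act g M = g ** M ** transpose g"

end

theory Submission
  imports Defs
begin

text \<open>
  Every skew form of rank four is congruent to \<open>\<omega> = e\<^sub>0\<and>e\<^sub>1 + e\<^sub>2\<and>e\<^sub>3\<close>, so we may take
  \<open>A = \<omega>\<close>. The second generator \<open>B\<close> is then normalised by elements of the stabiliser
  of \<open>\<omega>\<close> and by the substitution \<open>B \<mapsto> B + c\<omega>\<close>, neither of which changes the line up
  to \<open>GL\<^sub>6\<close>. A skew \<open>6\<times>6\<close> matrix of rank four has
  vanishing Pfaffian (a nonzero Pfaffian makes the Pfaffian adjugate an inverse up to a scalar),
  so all coefficients of the polynomial \<open>s \<mapsto> Pf (s\<omega> + B)\<close> vanish. And a skew matrix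
  satisfying the Pluecker relations at a nonzero entry has rank at most two. These force
  \<open>B\<close> into one of the forms \<open>e\<^sub>0\<and>e\<^sub>4 + e\<^sub>2\<and>e\<^sub>5\<close> and \<open>e\<^sub>0\<and>e\<^sub>4 + e\<^sub>2\<and>e\<^sub>1\<close>,
  according to whether \<open>B\<close> pairs \<open>e\<^sub>5\<close> with the plane \<open>\<langle>e\<^sub>2, e\<^sub>3\<rangle>\<close>, and the
  transposition of \<open>e\<^sub>1\<close> and \<open>e\<^sub>2\<close> carries the two resulting lines to those of the statement.
\<close>

lemma exhaust_6:
  fixes x :: 6
  shows "x = 0 \<or> x = 1 \<or> x = 2 \<or> x = 3 \<or> x = 4 \<or> x = 5"
proof (induct x)
  case (of_int z)
  then have "z = 0 \<or> z = 1 \<or> z = 2 \<or> z = 3 \<or> z = 4 \<or> z = 5" by fastforce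
  then show ?case by auto
qed

lemma UNIV_6: "(UNIV :: 6 set) = {0, 1, 2, 3, 4, 5}"
  using exhaust_6 by auto

lemma sum_UNIV_6: "sum f (UNIV :: 6 set) = f 0 + f 1 + f 2 + f 3 + f 4 + f 5"
  unfolding UNIV_6 by (simp add: add.assoc)

lemma all_6: "(\<forall>i :: 6. P i) \<longleftrightarrow> P 0 \<and> P 1 \<and> P 2 \<and> P 3 \<and> P 4 \<and> P 5"
proof
  assume "P 0 \<and> P 1 \<and> P 2 \<and> P 3 \<and> P 4 \<and> P 5"
  then show "\<forall>i. P i" by (metis exhaust_6)
qed simp

lemma matrix_eq_iff: "M = N \<longleftrightarrow> (\<forall>i j. M$i$j = N$i$j)"
  by (simp add: vec_eq_iff)

section \<open>Rank over an arbitrary field\<close>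

lemma row_matrix_mult: "row i (g ** M) = (\<Sum>k\<in>UNIV. g$i$k *s row k M)"
  by (simp add: vec_eq_iff row_def matrix_matrix_mult_def)

lemma rank_mult_left_le:
  fixes g :: "'a::field^'m^'k" and M :: "'a^'n^'m"
  shows "rank (g ** M) \<le> rank M"
proof -
  have "rows (g ** M) \<subseteq> vec.span (rows M)"
  proof
    fix x assume "x \<in> rows (g ** M)"
    then obtain i where x: "x = row i (g ** M)" by (auto simp: rows_def)
    have "(\<Sum>k\<in>UNIV. g$i$k *s row k M) \<in> vec.span (rows M)"
      by (intro vec.span_sum vec.span_scale vec.span_base) (auto simp: rows_def)
    then show "x \<in> vec.span (rows M)" by (simp add: x row_matrix_mult)
  qed
  then show ?thesis unfolding row_rank_def_gen by (rule vec.dim_mono)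
qed

lemma row_matrix_mult_right:
  fixes M :: "'a::comm_semiring_1^'m^'k" and h :: "'a^'n^'m"
  shows "row i (M ** h) = transpose h *v row i M"
  unfolding vec_eq_iff row_def matrix_matrix_mult_def matrix_vector_mult_def transpose_def
  by (simp, intro allI sum.cong refl, simp add: mult.commute)

lemma rank_mult_right_le:
  fixes M :: "'a::field^'m^'k" and h :: "'a^'n^'m"
  shows "rank (M ** h) \<le> rank M"
proof -
  have "rows (M ** h) = (\<lambda>x. transpose h *v x) ` rows M"
    by (auto simp: rows_def row_matrix_mult_right)
  then show ?thesis unfolding row_rank_def_gen
    using vec.dim_image_le[OF matrix_vector_mul_linear_gen, of "transpose h" "rows M"] by simp
qed

lemma rank_right_invertible:
  fixes M :: "'a::field^'n^'n"
  assumes "M ** Q = mat 1"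
  shows "rank M = CARD('n)"
proof -
  have "Q ** M = mat 1" using assms by (simp add: matrix_left_right_inverse)
  then have "vec.span (rows M) = UNIV" using matrix_left_invertible_span_rows_gen by blast
  then have "vec.dim (rows M) = vec.dim (UNIV :: ('a^'n) set)"
    using vec.dim_span[of "rows M"] by simp
  then show ?thesis unfolding row_rank_def_gen by (simp add: vec_dim_card card_cart_basis)
qed

lemma rank_le_2_if_rows_in_span:
  assumes "\<And>k. row k M \<in> vec.span {u, v}"
  shows "rank M \<le> 2"
proof -
  have "rows M \<subseteq> vec.span {u, v}" using assms by (auto simp: rows_def)
  then have "vec.dim (rows M) \<le> card {u, v}" by (rule vec.dim_le_card) simp
  also have "\<dots> \<le> 2" by (simp add: card_insert_le_m1)
  finally show ?thesis unfolding row_rank_def_gen .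
qed

text \<open>The relations say that row \<open>k\<close> is \<open>(M\<^sub>i\<^sub>k row j - M\<^sub>j\<^sub>k row i) / M\<^sub>i\<^sub>j\<close>.\<close>
lemma rank_le_2_if_plucker:
  fixes M :: "'a::field^'n^'n"
  assumes ij: "M$i$j \<noteq> 0"
    and plucker: "\<And>k l. M$i$j * M$k$l = M$i$k * M$j$l - M$i$l * M$j$k"
  shows "rank M \<le> 2"
proof (rule rank_le_2_if_rows_in_span)
  fix k
  have row_k: "row k M = (M$i$k / M$i$j) *s row j M + (- M$j$k / M$i$j) *s row i M"
    unfolding vec_eq_iff
  proof
    fix l
    have "row k M $ l = (M$i$j * M$k$l) / M$i$j" using ij by (simp add: row_def)
    also have "\<dots> = ((M$i$k / M$i$j) *s row j M + (- M$j$k / M$i$j) *s row i M) $ l"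
      unfolding plucker by (simp add: row_def diff_divide_distrib mult.commute)
    finally show "row k M $ l = \<dots>" .
  qed
  show "row k M \<in> vec.span {row j M, row i M}"
    unfolding row_k by (intro vec.span_add vec.span_scale vec.span_base) auto
qed

section \<open>Skew matrices and the action of \<open>GL\<^sub>6\<close>\<close>

lemma skew_iff: "skew M \<longleftrightarrow> (\<forall>i j. M$i$j = - M$j$i)"
  unfolding skew_def by (auto simp: vec_eq_iff transpose_def)

lemma skew_antisym: "skew M \<Longrightarrow> M$i$j = - M$j$i"
  unfolding skew_iff by blast

lemma skew_diag: "skew M \<Longrightarrow> M$i$i = 0"
  using skew_antisym[of M i i] by simp

lemma skew_lower_entries:
  assumes "skew M"
  shows "M$0$0 = 0" "M$1$1 = 0" "M$2$2 = 0" "M$3$3 = 0" "M$4$4 = 0" "M$5$5 = 0"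
    "M$1$0 = - M$0$1" "M$2$0 = - M$0$2" "M$2$1 = - M$1$2" "M$3$0 = - M$0$3"
    "M$3$1 = - M$1$3" "M$3$2 = - M$2$3" "M$4$0 = - M$0$4" "M$4$1 = - M$1$4"
    "M$4$2 = - M$2$4" "M$4$3 = - M$3$4" "M$5$0 = - M$0$5" "M$5$1 = - M$1$5"
    "M$5$2 = - M$2$5" "M$5$3 = - M$3$5" "M$5$4 = - M$4$5"
  by (rule skew_diag[OF assms] skew_antisym[OF assms])+

lemma lin2_entry [simp]: "lin2 a A b B $ i $ j = a * A$i$j + b * B$i$j"
  by (simp add: lin2_def)

lemma lin2_0_1: "lin2 0 A 1 B = B"
  by (simp add: matrix_eq_iff)

lemma lin2_1_0: "lin2 1 A 0 B = A"
  by (simp add: matrix_eq_iff)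

lemma skew_lin2: "skew A \<Longrightarrow> skew B \<Longrightarrow> skew (lin2 a A b B)"
  unfolding skew_iff lin2_entry by (metis minus_add_distrib mult_minus_right)

lemma act_entry: "act g M $ i $ j = (\<Sum>k\<in>UNIV. \<Sum>l\<in>UNIV. g$i$k * M$k$l * g$j$l)"
proof -
  have "act g M $ i $ j = (\<Sum>l\<in>UNIV. (\<Sum>k\<in>UNIV. g$i$k * M$k$l) * g$j$l)"
    unfolding act_def matrix_matrix_mult_def transpose_def by simp
  also have "\<dots> = (\<Sum>l\<in>UNIV. \<Sum>k\<in>UNIV. g$i$k * M$k$l * g$j$l)"
    by (simp only: sum_distrib_right)
  also have "\<dots> = (\<Sum>k\<in>UNIV. \<Sum>l\<in>UNIV. g$i$k * M$k$l * g$j$l)"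
    by (rule sum.swap)
  finally show ?thesis .
qed

lemma act_comp: "act g (act h M) = act (g ** h) M"
  unfolding act_def by (simp add: matrix_mul_assoc matrix_transpose_mul)

lemma act_mat_1: "act (mat 1) M = M"
  unfolding act_def by simp

lemma act_lin2: "act g (lin2 a A b B) = lin2 a (act g A) b (act g B)"
proof -
  have "g$i$k * (a * A$k$l + b * B$k$l) * g$j$l
      = a * (g$i$k * A$k$l * g$j$l) + b * (g$i$k * B$k$l * g$j$l)" for i j k l
    by (simp add: algebra_simps)
  then show ?thesis
    unfolding matrix_eq_iff act_entry lin2_entry by (simp add: sum.distrib sum_distrib_left)
qed

lemma act_skew: "skew M \<Longrightarrow> skew (act g M)"
proof -
  assume s: "skew M"
  have "act g M $ i $ j = - act g M $ j $ i" for i j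
  proof -
    have "act g M $ i $ j = (\<Sum>k\<in>UNIV. \<Sum>l\<in>UNIV. - (g$j$l * M$l$k * g$i$k))"
      unfolding act_entry by (intro sum.cong refl, subst skew_antisym[OF s]) simp
    also have "\<dots> = - act g M $ j $ i"
      unfolding act_entry by (subst sum.swap) (simp add: sum_negf)
    finally show ?thesis .
  qed
  then show ?thesis unfolding skew_iff by blast
qed

lemma rank_act_le: "rank (act g M) \<le> rank M"
  unfolding act_def using rank_mult_right_le rank_mult_left_le order_trans by blast

lemma rank_act:
  assumes "invertible g"
  shows "rank (act g M) = rank M"
proof -
  obtain g' where "g' ** g = mat 1" using assms unfolding invertible_def by blast
  then have "act g' (act g M) = M" by (simp add: act_comp act_mat_1)
  then have "rank M \<le> rank (act g M)" using rank_act_le[of g' "act g M"] by simp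
  then show ?thesis using rank_act_le[of g M] by simp
qed

lemma act_pline: "act g ` pline A B = pline (act g A) (act g B)"
proof
  show "act g ` pline A B \<subseteq> pline (act g A) (act g B)"
    unfolding pline_def using act_lin2 by blast
  show "pline (act g A) (act g B) \<subseteq> act g ` pline A B"
  proof
    fix x assume "x \<in> pline (act g A) (act g B)"
    then obtain a b where "x = act g (lin2 a A b B)" unfolding pline_def by (auto simp: act_lin2)
    then show "x \<in> act g ` pline A B" unfolding pline_def by blast
  qed
qed

section \<open>Elementary matrices\<close>

definition transvection :: "'n \<Rightarrow> 'n \<Rightarrow> 'a \<Rightarrow> 'a::comm_ring_1^'n^'n" where
  "transvection k i c = (\<chi> a b. (if a = b then 1 else 0) + (if a = k \<and> b = i then c else 0))"

definition dilation :: "'n \<Rightarrow> 'a \<Rightarrow> 'a::comm_ring_1^'n^'n" where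
  "dilation i c = (\<chi> a b. if a = b then (if a = i then c else 1) else 0)"

definition perm_matrix :: "('n \<Rightarrow> 'n) \<Rightarrow> 'a::comm_ring_1^'n^'n" where
  "perm_matrix p = (\<chi> a b. if b = p a then 1 else 0)"

lemma if_zero_mult: "(if P then x else 0) * y = (if P then x * y else (0::'a::mult_zero))"
  by simp

lemma mult_if_zero: "y * (if P then x else 0) = (if P then y * x else (0::'a::mult_zero))"
  by simp

lemma transvection_mult:
  "(transvection k i c ** M) $ a $ b = M$a$b + (if a = k then c * M$i$b else 0)"
  by (cases "a = k") (simp_all add: matrix_matrix_mult_def transvection_def distrib_right
      sum.distrib if_zero_mult)

lemma mult_transpose_transvection:
  "(M ** transpose (transvection k i c)) $ a $ b = M$a$b + (if b = k then c * M$a$i else 0)"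
  by (cases "b = k") (simp_all add: matrix_matrix_mult_def transpose_def transvection_def
      distrib_left sum.distrib mult_if_zero mult.commute)

lemma dilation_mult: "(dilation i c ** M) $ a $ b = (if a = i then c else 1) * M$a$b"
  by (cases "a = i") (simp_all add: matrix_matrix_mult_def dilation_def if_zero_mult)

lemma mult_transpose_dilation:
  "(M ** transpose (dilation i c)) $ a $ b = M$a$b * (if b = i then c else 1)"
  by (cases "b = i") (simp_all add: matrix_matrix_mult_def transpose_def dilation_def mult_if_zero)

lemma perm_matrix_mult: "(perm_matrix p ** M) $ a $ b = M $ (p a) $ b"
  by (simp add: matrix_matrix_mult_def perm_matrix_def if_zero_mult)

lemma mult_transpose_perm_matrix: "(M ** transpose (perm_matrix p)) $ a $ b = M $ a $ (p b)"
  by (simp add: matrix_matrix_mult_def transpose_def perm_matrix_def mult_if_zero)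

lemma act_transvection:
  "act (transvection k i c) M $ a $ b = M$a$b + (if a = k then c * M$i$b else 0)
     + (if b = k then c * M$a$i else 0) + (if a = k \<and> b = k then c * c * M$i$i else 0)"
  unfolding act_def mult_transpose_transvection transvection_mult by (simp add: algebra_simps)

lemma act_dilation:
  "act (dilation i c) M $ a $ b = (if a = i then c else 1) * (if b = i then c else 1) * M$a$b"
  unfolding act_def mult_transpose_dilation dilation_mult by simp

lemma act_perm_matrix: "act (perm_matrix p) M $ a $ b = M $ (p a) $ (p b)"
  unfolding act_def mult_transpose_perm_matrix perm_matrix_mult ..

lemmas act_elementary = act_comp[symmetric] act_transvection act_dilation act_perm_matrix

lemma invertible_transvection:
  fixes c :: "'a::field"
  assumes "k \<noteq> i"
  shows "invertible (transvection k i c :: 'a^'n^'n)"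
proof -
  have "transvection k i c ** transvection k i (- c) = mat 1"
    using assms unfolding matrix_eq_iff transvection_mult by (simp add: transvection_def mat_def)
  then show ?thesis unfolding invertible_right_inverse by blast
qed

lemma invertible_dilation:
  fixes c :: "'a::field"
  assumes "c \<noteq> 0"
  shows "invertible (dilation i c :: 'a^'n^'n)"
proof -
  have "dilation i c ** dilation i (1 / c) = mat 1"
    using assms unfolding matrix_eq_iff dilation_mult by (simp add: dilation_def mat_def)
  then show ?thesis unfolding invertible_right_inverse by blast
qed

lemma invertible_perm_matrix:
  assumes "bij p"
  shows "invertible (perm_matrix p :: 'a::field^'n^'n)"
proof -
  have "perm_matrix p ** perm_matrix (inv p) = mat 1"
    using assms unfolding matrix_eq_iff perm_matrix_mult
    by (auto simp: perm_matrix_def mat_def bij_is_inj)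
  then show ?thesis unfolding invertible_right_inverse by blast
qed

lemma exists_bij_pair:
  assumes "a \<noteq> b" "i \<noteq> j"
  shows "\<exists>p. bij p \<and> p a = i \<and> p b = j \<and> (\<forall>x. x \<notin> {a, b, i, j} \<longrightarrow> p x = x)"
proof (intro exI conjI allI impI)
  let ?p = "Transposition.transpose a i \<circ> Transposition.transpose b (Transposition.transpose a i j)"
  show "bij ?p" by (simp add: bij_comp)
  show "?p a = i" "?p b = j" using assms by (auto simp: Transposition.transpose_def)
  show "?p x = x" if "x \<notin> {a, b, i, j}" for x
    using that by (auto simp: Transposition.transpose_def)
qed

section \<open>The Pfaffian\<close>

definition pf4 :: "complex^6^6 \<Rightarrow> 6 \<Rightarrow> 6 \<Rightarrow> 6 \<Rightarrow> 6 \<Rightarrow> complex" where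
  "pf4 M a b c d = M$a$b * M$c$d - M$a$c * M$b$d + M$a$d * M$b$c"

definition pf6 :: "complex^6^6 \<Rightarrow> complex" where
  "pf6 M = M$0$1 * pf4 M 2 3 4 5 - M$0$2 * pf4 M 1 3 4 5 + M$0$3 * pf4 M 1 2 4 5
    - M$0$4 * pf4 M 1 2 3 5 + M$0$5 * pf4 M 1 2 3 4"

text \<open>For \<open>a < b\<close>: \<open>(-1)\<^sup>a\<^sup>+\<^sup>b\<close> times the Pfaffian of the minor complementary to \<open>{a, b}\<close>.\<close>
definition pfaffian_cofactor :: "complex^6^6 \<Rightarrow> 6 \<Rightarrow> 6 \<Rightarrow> complex" where
  "pfaffian_cofactor M a b =
    (if (a, b) = (0, 1) then - pf4 M 2 3 4 5 else
     if (a, b) = (0, 2) then pf4 M 1 3 4 5 else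
     if (a, b) = (0, 3) then - pf4 M 1 2 4 5 else
     if (a, b) = (0, 4) then pf4 M 1 2 3 5 else
     if (a, b) = (0, 5) then - pf4 M 1 2 3 4 else
     if (a, b) = (1, 2) then - pf4 M 0 3 4 5 else
     if (a, b) = (1, 3) then pf4 M 0 2 4 5 else
     if (a, b) = (1, 4) then - pf4 M 0 2 3 5 else
     if (a, b) = (1, 5) then pf4 M 0 2 3 4 else
     if (a, b) = (2, 3) then - pf4 M 0 1 4 5 else
     if (a, b) = (2, 4) then pf4 M 0 1 3 5 else
     if (a, b) = (2, 5) then - pf4 M 0 1 3 4 else
     if (a, b) = (3, 4) then - pf4 M 0 1 2 5 else
     if (a, b) = (3, 5) then pf4 M 0 1 2 4 else
     if (a, b) = (4, 5) then - pf4 M 0 1 2 3 else 0)"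

definition pfaffian_adjugate :: "complex^6^6 \<Rightarrow> complex^6^6" where
  "pfaffian_adjugate M = (\<chi> a b. pfaffian_cofactor M a b - pfaffian_cofactor M b a)"

lemma skew_mult_pfaffian_adjugate:
  assumes "skew M"
  shows "M ** pfaffian_adjugate M = mat (pf6 M)"
  unfolding matrix_eq_iff all_6 matrix_matrix_mult_def vec_lambda_beta sum_UNIV_6 mat_def
  by (simp add: pfaffian_adjugate_def pfaffian_cofactor_def pf6_def pf4_def
      skew_lower_entries[OF assms] algebra_simps)

lemma rank_6_if_pfaffian_nonzero:
  assumes "skew M" and "pf6 M \<noteq> 0"
  shows "rank M = 6"
proof -
  have "M ** (\<chi> a b. pfaffian_adjugate M $ a $ b / pf6 M) = mat 1"
    using skew_mult_pfaffian_adjugate[OF assms(1)] assms(2)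
    by (simp add: matrix_eq_iff matrix_matrix_mult_def sum_divide_distrib[symmetric] mat_def)
  then show ?thesis using rank_right_invertible by fastforce
qed

lemma rank_le_2_if_block_pfaffian_zero:
  assumes sk: "skew M" and z4: "\<And>k. M$k$4 = 0" and z5: "\<And>k. M$k$5 = 0"
    and pf: "pf4 M 0 1 2 3 = 0"
  shows "rank M \<le> 2"
proof -
  have z4': "M$4$k = 0" and z5': "M$5$k = 0" for k
    using z4 z5 skew_antisym[OF sk] by (metis neg_0_equal_iff_equal)+
  have plucker:
    "\<forall>k l. M$0$1 * M$k$l = M$0$k * M$1$l - M$0$l * M$1$k"
    "\<forall>k l. M$0$2 * M$k$l = M$0$k * M$2$l - M$0$l * M$2$k"
    "\<forall>k l. M$0$3 * M$k$l = M$0$k * M$3$l - M$0$l * M$3$k"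
    "\<forall>k l. M$1$2 * M$k$l = M$1$k * M$2$l - M$1$l * M$2$k"
    "\<forall>k l. M$1$3 * M$k$l = M$1$k * M$3$l - M$1$l * M$3$k"
    "\<forall>k l. M$2$3 * M$k$l = M$2$k * M$3$l - M$2$l * M$3$k"
    by (insert pf; simp add: all_6 skew_lower_entries[OF sk] z4 z5 z4' z5' pf4_def; algebra)+
  show ?thesis
  proof (cases "M$0$1 = 0 \<and> M$0$2 = 0 \<and> M$0$3 = 0 \<and> M$1$2 = 0 \<and> M$1$3 = 0 \<and> M$2$3 = 0")
    case True
    then have "row k M = 0" for k
      using exhaust_6[of k]
      by (auto simp: vec_eq_iff row_def all_6 skew_lower_entries[OF sk] z4 z5 z4' z5')
    then show ?thesis by (intro rank_le_2_if_rows_in_span[of M 0 0]) (simp add: vec.span_zero)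
  next
    case False
    then show ?thesis using plucker by (auto intro: rank_le_2_if_plucker)
  qed
qed

section \<open>Skew forms of rank four\<close>

definition omega :: "complex^6^6" where
  "omega = wedge 0 1 + wedge 2 3"

lemma wedge_entry:
  "wedge i j $ a $ b = (if a = i \<and> b = j then 1 else 0) - (if a = j \<and> b = i then 1 else 0)"
  by (simp add: wedge_def)

lemma omega_entry:
  "omega $ a $ b = (if a = 0 \<and> b = 1 then 1 else if a = 1 \<and> b = 0 then -1 else
     if a = 2 \<and> b = 3 then 1 else if a = 3 \<and> b = 2 then -1 else 0)"
  by (auto simp: omega_def wedge_entry)

lemma rank_wedge_le_2: "rank (wedge i j) \<le> 2"
proof (rule rank_le_2_if_rows_in_span)
  fix k
  have row_k: "row k (wedge i j)
      = (if k = i then 1 else 0) *s axis j 1 + (if k = j then -1 else 0) *s axis i (1 :: complex)"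
    by (auto simp: vec_eq_iff row_def wedge_entry axis_def)
  show "row k (wedge i j) \<in> vec.span {axis j 1, axis i 1}"
    unfolding row_k by (intro vec.span_add vec.span_scale vec.span_base) auto
qed

definition congruent :: "complex^6^6 \<Rightarrow> complex^6^6 \<Rightarrow> bool" where
  "congruent M N \<longleftrightarrow> (\<exists>g. invertible g \<and> act g M = N)"

lemma congruent_act: "invertible g \<Longrightarrow> congruent M (act g M)"
  unfolding congruent_def by blast

lemma congruent_trans:
  assumes "congruent L M" and "congruent M N"
  shows "congruent L N"
proof -
  obtain g h where "invertible g" "act g L = M" "invertible h" "act h M = N"
    using assms unfolding congruent_def by blast
  then show ?thesis
    unfolding congruent_def using invertible_mult act_comp by metis
qed

lemma congruent_skew: "congruent M N \<Longrightarrow> skew M \<Longrightarrow> skew N"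
  unfolding congruent_def using act_skew by blast

lemma congruent_rank: "congruent M N \<Longrightarrow> rank N = rank M"
  unfolding congruent_def using rank_act by blast

lemma congruent_pivot_01:
  assumes "skew A" and "A \<noteq> 0"
  obtains A' where "congruent A A'" "A'$0$1 = 1"
proof -
  obtain i j where ij: "A$i$j \<noteq> 0"
    using assms(2) by (auto simp: matrix_eq_iff)
  then have "i \<noteq> j" using skew_diag[OF assms(1)] by auto
  then obtain p :: "6 \<Rightarrow> 6" where p: "bij p" "p 0 = i" "p 1 = j"
    using exists_bij_pair[of 0 1 i j] by auto
  let ?g = "dilation 0 (1 / A$i$j) ** perm_matrix p"
  have "invertible ?g"
    using ij p by (simp add: invertible_mult invertible_dilation invertible_perm_matrix)
  moreover have "act ?g A $ 0 $ 1 = 1"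
    using ij p by (simp add: act_elementary)
  ultimately show thesis using that congruent_act by blast
qed

text \<open>The basis change \<open>e\<^sub>k \<mapsto> e\<^sub>k + A\<^sub>1\<^sub>k e\<^sub>0 - A\<^sub>0\<^sub>k e\<^sub>1\<close> (\<open>k \<ge> 2\<close>) makes \<open>e\<^sub>k\<close> orthogonal to \<open>e\<^sub>0\<close> and \<open>e\<^sub>1\<close>.\<close>
lemma split_hyperbolic_plane_01:
  assumes sk: "skew A" and A01: "A$0$1 = 1"
  obtains A' where "congruent A A'" "\<forall>k. A'$0$k = omega$0$k" "\<forall>k. A'$1$k = omega$1$k"
proof -
  let ?g = "transvection 5 0 (A$1$5) ** transvection 5 1 (- A$0$5) **
    transvection 4 0 (A$1$4) ** transvection 4 1 (- A$0$4) **
    transvection 3 0 (A$1$3) ** transvection 3 1 (- A$0$3) **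
    transvection 2 0 (A$1$2) ** transvection 2 1 (- A$0$2) :: complex^6^6"
  have "invertible ?g"
    by (simp add: invertible_mult invertible_transvection)
  moreover have "\<forall>k. act ?g A $ 0 $ k = omega$0$k" "\<forall>k. act ?g A $ 1 $ k = omega$1$k"
    unfolding all_6 by (simp_all add: act_elementary skew_lower_entries[OF sk] A01 omega_entry)
  ultimately show thesis using that congruent_act by blast
qed

lemma congruent_pivot_23:
  assumes sk: "skew A" and row0: "\<forall>k. A$0$k = omega$0$k" and row1: "\<forall>k. A$1$k = omega$1$k"
    and block: "\<not> (A$2$3 = 0 \<and> A$2$4 = 0 \<and> A$2$5 = 0 \<and> A$3$4 = 0 \<and> A$3$5 = 0 \<and> A$4$5 = 0)"
  obtains A' where "congruent A A'" "\<forall>k. A'$0$k = omega$0$k" "\<forall>k. A'$1$k = omega$1$k"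
    "A'$2$3 = 1"
proof -
  have "\<not> (\<forall>i j. i \<notin> {0, 1} \<longrightarrow> j \<notin> {0, 1} \<longrightarrow> i \<noteq> j \<longrightarrow> A$i$j = 0)"
    using block unfolding all_6 by (simp add: skew_lower_entries[OF sk])
  then obtain i j where ij: "A$i$j \<noteq> 0" "i \<noteq> j" "i \<notin> {0, 1}" "j \<notin> {0, 1}"
    by blast
  obtain p :: "6 \<Rightarrow> 6" where p: "bij p" "p 2 = i" "p 3 = j" "\<forall>x. x \<notin> {2, 3, i, j} \<longrightarrow> p x = x"
    using exists_bij_pair[of 2 3 i j] ij(2) by auto
  have p01: "p 0 = 0" "p 1 = 1" using p(4) ij(3,4) by auto
  have p_eq: "p k = 0 \<longleftrightarrow> k = 0" "p k = 1 \<longleftrightarrow> k = 1" for k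
    using inj_eq[OF bij_is_inj[OF p(1)], of k] p01 by metis+
  let ?g = "dilation 2 (1 / A$i$j) ** perm_matrix p"
  have "invertible ?g"
    using ij p by (simp add: invertible_mult invertible_dilation invertible_perm_matrix)
  moreover have "act ?g A $ 2 $ 3 = 1"
    using ij p by (simp add: act_elementary)
  moreover have "\<forall>k. act ?g A $ 0 $ k = omega$0$k" "\<forall>k. act ?g A $ 1 $ k = omega$1$k"
    using row0 row1 by (simp_all add: act_elementary p01 p_eq omega_entry)
  ultimately show thesis using that congruent_act by blast
qed

lemma split_hyperbolic_plane_23:
  assumes sk: "skew A" and row0: "\<forall>k. A$0$k = omega$0$k" and row1: "\<forall>k. A$1$k = omega$1$k"
    and A23: "A$2$3 = 1"
  obtains A' where "congruent A A'" "\<forall>a k. a \<notin> {4, 5} \<longrightarrow> A'$a$k = omega$a$k"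
proof -
  let ?g = "transvection 5 2 (A$3$5) ** transvection 5 3 (- A$2$5) **
    transvection 4 2 (A$3$4) ** transvection 4 3 (- A$2$4) :: complex^6^6"
  have "invertible ?g"
    by (simp add: invertible_mult invertible_transvection)
  moreover have "\<forall>a k. a \<notin> {4, 5} \<longrightarrow> act ?g A $ a $ k = omega$a$k"
    using row0 row1 unfolding all_6
    by (simp add: act_elementary skew_lower_entries[OF sk] A23 omega_entry)
  ultimately show thesis using that congruent_act by blast
qed

lemma skew_rank4_eq_omega:
  assumes sk: "skew A" and rk: "rank A = 4"
    and rows: "\<forall>a k. a \<notin> {4, 5} \<longrightarrow> A$a$k = omega$a$k"
  shows "A = omega"
proof -
  have rows': "A$a$k = omega$a$k" if "a \<notin> {4, 5}" for a k
    using rows that by blast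
  have "pf6 A = A$4$5"
    by (simp add: pf6_def pf4_def rows' skew_lower_entries[OF sk] omega_entry)
  then have "A$4$5 = 0" using rank_6_if_pfaffian_nonzero[OF sk] rk by fastforce
  then show ?thesis
    unfolding matrix_eq_iff all_6 by (simp add: rows' skew_lower_entries[OF sk] omega_entry)
qed

lemma skew_rank4_congruent_omega:
  assumes sk: "skew A" and rk: "rank A = 4"
  shows "congruent A omega"
proof -
  have "A \<noteq> 0"
  proof
    assume "A = 0"
    then have "rank A \<le> 2" by (intro rank_le_2_if_rows_in_span[of A 0 0]) (simp add: row_def vec.span_zero vec_eq_iff)
    then show False using rk by simp
  qed
  then obtain A1 where A1: "congruent A A1" "A1$0$1 = 1"
    using congruent_pivot_01[OF sk] by blast
  have sk1: "skew A1" using congruent_skew[OF A1(1) sk] .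
  obtain A2 where A2: "congruent A1 A2" "\<forall>k. A2$0$k = omega$0$k" "\<forall>k. A2$1$k = omega$1$k"
    using split_hyperbolic_plane_01[OF sk1 A1(2)] by blast
  have sk2: "skew A2" using congruent_skew[OF A2(1) sk1] .
  have rk2: "rank A2 = 4" using A1(1) A2(1) rk by (simp add: congruent_rank)
  have block: "\<not> (A2$2$3 = 0 \<and> A2$2$4 = 0 \<and> A2$2$5 = 0 \<and> A2$3$4 = 0 \<and> A2$3$5 = 0 \<and> A2$4$5 = 0)"
  proof
    assume "A2$2$3 = 0 \<and> A2$2$4 = 0 \<and> A2$2$5 = 0 \<and> A2$3$4 = 0 \<and> A2$3$5 = 0 \<and> A2$4$5 = 0"
    then have "A2 = wedge 0 1"
      using A2(2,3) unfolding matrix_eq_iff all_6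
      by (simp add: skew_lower_entries[OF sk2] omega_entry wedge_entry)
    then show False using rk2 rank_wedge_le_2[of 0 1] by simp
  qed
  obtain A3 where A3: "congruent A2 A3" "\<forall>k. A3$0$k = omega$0$k" "\<forall>k. A3$1$k = omega$1$k"
      "A3$2$3 = 1"
    using congruent_pivot_23[OF sk2 A2(2,3) block] by blast
  have sk3: "skew A3" using congruent_skew[OF A3(1) sk2] .
  obtain A4 where A4: "congruent A3 A4" "\<forall>a k. a \<notin> {4, 5} \<longrightarrow> A4$a$k = omega$a$k"
    using split_hyperbolic_plane_23[OF sk3 A3(2-4)] by blast
  have "A4 = omega"
    using skew_rank4_eq_omega congruent_skew[OF A4(1) sk3] A4(2) A1(1) A2(1) A3(1) A4(1) rk
    by (simp add: congruent_rank)
  then show ?thesis using A1(1) A2(1) A3(1) A4(1) congruent_trans by metis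
qed

section \<open>Lines of rank-four forms\<close>

definition rank4_pencil :: "complex^6^6 \<Rightarrow> complex^6^6 \<Rightarrow> bool" where
  "rank4_pencil A B \<longleftrightarrow> skew A \<and> skew B \<and> (\<forall>a b. (a, b) \<noteq> (0, 0) \<longrightarrow> rank (lin2 a A b B) = 4)"

lemma rank4_pencil_skew: "rank4_pencil A B \<Longrightarrow> skew B"
  unfolding rank4_pencil_def by blast

lemma rank4_pencil_skew_lin2: "rank4_pencil A B \<Longrightarrow> skew (lin2 s A t B)"
  unfolding rank4_pencil_def using skew_lin2 by blast

lemma rank4_pencil_rank: "rank4_pencil A B \<Longrightarrow> (s, t) \<noteq> (0, 0) \<Longrightarrow> rank (lin2 s A t B) = 4"
  unfolding rank4_pencil_def by blast

definition gl_equivalent :: "(complex^6^6) set \<Rightarrow> (complex^6^6) set \<Rightarrow> bool" where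
  "gl_equivalent L L' \<longleftrightarrow> (\<exists>g. invertible g \<and> act g ` L = L')"

lemma gl_equivalent_refl: "gl_equivalent L L"
proof -
  have "invertible (mat 1 :: complex^6^6)"
    unfolding invertible_def by auto
  then show ?thesis unfolding gl_equivalent_def by (auto simp: act_mat_1)
qed

lemma gl_equivalent_trans [trans]:
  assumes "gl_equivalent L M" and "gl_equivalent M N"
  shows "gl_equivalent L N"
proof -
  obtain g h where "invertible g" "act g ` L = M" "invertible h" "act h ` M = N"
    using assms unfolding gl_equivalent_def by blast
  then have "invertible (h ** g)" "act (h ** g) ` L = N"
    by (auto simp: invertible_mult image_image act_comp)
  then show ?thesis unfolding gl_equivalent_def by blast
qed

lemma gl_equivalent_act: "invertible g \<Longrightarrow> gl_equivalent (pline A B) (pline (act g A) (act g B))"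
  unfolding gl_equivalent_def act_pline by blast

lemma lin2_shear: "lin2 a A b (lin2 c A 1 B) = lin2 (a + b * c) A b B"
  by (simp add: matrix_eq_iff algebra_simps)

lemma pline_shear: "pline A (lin2 c A 1 B) = pline A B"
proof
  show "pline A (lin2 c A 1 B) \<subseteq> pline A B"
    unfolding pline_def lin2_shear by blast
  show "pline A B \<subseteq> pline A (lin2 c A 1 B)"
  proof
    fix x assume "x \<in> pline A B"
    then obtain a b where "x = lin2 a A b B" unfolding pline_def by blast
    then have "x = lin2 (a - b * c) A b (lin2 c A 1 B)" by (simp add: lin2_shear)
    then show "x \<in> pline A (lin2 c A 1 B)" unfolding pline_def by blast
  qed
qed

lemma rank4_pencil_act:
  assumes "invertible g" and "rank4_pencil A B"
  shows "rank4_pencil (act g A) (act g B)"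
  using assms act_skew unfolding rank4_pencil_def by (simp add: act_lin2[symmetric] rank_act)

lemma rank4_pencil_shear:
  assumes "rank4_pencil A B"
  shows "rank4_pencil A (lin2 c A 1 B)"
  unfolding rank4_pencil_def lin2_shear
proof (intro conjI allI impI)
  show "skew A" "skew (lin2 c A 1 B)" using assms skew_lin2 unfolding rank4_pencil_def by auto
  show "rank (lin2 (a + b * c) A b B) = 4" if "(a, b) \<noteq> (0, 0)" for a b
  proof -
    have "(a + b * c, b) \<noteq> (0, 0)" using that by auto
    then show ?thesis using assms unfolding rank4_pencil_def by blast
  qed
qed

lemma rank4_pencil_pfaffian:
  assumes "rank4_pencil A B" and "(s, t) \<noteq> (0, 0)"
  shows "pf6 (lin2 s A t B) = 0"
proof (rule ccontr)
  assume "pf6 (lin2 s A t B) \<noteq> 0"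
  then have "rank (lin2 s A t B) = 6"
    by (rule rank_6_if_pfaffian_nonzero[OF rank4_pencil_skew_lin2[OF assms(1)]])
  then show False using rank4_pencil_rank[OF assms] by simp
qed

section \<open>The stabiliser of \<open>\<omega>\<close>\<close>

definition stabilises_omega :: "complex^6^6 \<Rightarrow> bool" where
  "stabilises_omega g \<longleftrightarrow> invertible g \<and> act g omega = omega"

lemma stabilises_omega_mult:
  "stabilises_omega g \<Longrightarrow> stabilises_omega h \<Longrightarrow> stabilises_omega (g ** h)"
  unfolding stabilises_omega_def by (simp add: invertible_mult act_comp[symmetric])

lemma stabilises_omega_generators:
  shows stabilises_omega_transvection_4: "k \<noteq> 4 \<Longrightarrow> stabilises_omega (transvection k 4 c)"
    and stabilises_omega_transvection_5: "k \<noteq> 5 \<Longrightarrow> stabilises_omega (transvection k 5 c)"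
    and stabilises_omega_transvection_10: "stabilises_omega (transvection 1 0 c)"
    and stabilises_omega_transvection_23: "stabilises_omega (transvection 2 3 c)"
    and stabilises_omega_transvection_32: "stabilises_omega (transvection 3 2 c)"
    and stabilises_omega_transvections_12_30:
      "stabilises_omega (transvection 1 2 c ** transvection 3 0 c)"
    and stabilises_omega_transvections_13_20:
      "stabilises_omega (transvection 1 3 c ** transvection 2 0 (- c))"
    and stabilises_omega_dilations_10:
      "c \<noteq> 0 \<Longrightarrow> stabilises_omega (dilation 1 c ** dilation 0 (1 / c))"
    and stabilises_omega_dilations_32:
      "c \<noteq> 0 \<Longrightarrow> stabilises_omega (dilation 3 c ** dilation 2 (1 / c))"
    and stabilises_omega_signed_swap_01:
      "stabilises_omega (dilation 1 (-1) ** perm_matrix (Transposition.transpose 0 1))"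
    and stabilises_omega_signed_swap_23:
      "stabilises_omega (dilation 3 (-1) ** perm_matrix (Transposition.transpose 2 3))"
    and stabilises_omega_swap_planes:
      "stabilises_omega (perm_matrix (Transposition.transpose 0 2 \<circ> Transposition.transpose 1 3))"
    and stabilises_omega_swap_45:
      "stabilises_omega (perm_matrix (Transposition.transpose 4 5))"
  unfolding stabilises_omega_def matrix_eq_iff all_6
  by (simp_all add: invertible_mult invertible_transvection invertible_dilation
      invertible_perm_matrix bij_comp act_elementary omega_entry)

lemma pencil_stabiliser_step:
  assumes "rank4_pencil omega B" and "stabilises_omega g"
  shows "rank4_pencil omega (act g B)" "gl_equivalent (pline omega B) (pline omega (act g B))"
  using assms rank4_pencil_act[of g omega B] gl_equivalent_act[of g omega B]
  unfolding stabilises_omega_def by auto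

lemma pencil_stabiliser_step_if:
  assumes "rank4_pencil omega B" and "stabilises_omega g" and "P B \<or> P (act g B)"
  obtains B' where "rank4_pencil omega B'" "gl_equivalent (pline omega B) (pline omega B')" "P B'"
  using assms pencil_stabiliser_step[OF assms(1,2)] gl_equivalent_refl by blast

section \<open>Normal forms of the second generator\<close>

lemma complex_quadratic_has_root: "\<exists>s::complex. s\<^sup>2 + p * s + q = 0"
proof
  let ?s = "(csqrt (p\<^sup>2 - 4 * q) - p) / 2"
  have "(csqrt (p\<^sup>2 - 4 * q))\<^sup>2 = p\<^sup>2 - 4 * q" by simp
  then show "?s\<^sup>2 + p * ?s + q = 0" by (simp add: field_simps power2_eq_square; algebra)
qed

text \<open>If \<open>B\<close> does not couple \<open>\<langle>e\<^sub>0, \<dots>, e\<^sub>3\<rangle>\<close> with \<open>\<langle>e\<^sub>4, e\<^sub>5\<rangle>\<close>, then \<open>pf6 (s\<omega> + B)\<close> is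
  \<open>B\<^sub>4\<^sub>5\<close> times the Pfaffian of the upper \<open>4\<times>4\<close> block of \<open>s\<omega> + B\<close>, a monic quadratic in \<open>s\<close>.
  Its vanishing forces \<open>B\<^sub>4\<^sub>5 = 0\<close>, and at a root of the quadratic \<open>s\<omega> + B\<close> has rank at most two.\<close>
lemma rank4_pencil_coupling_nonzero:
  assumes B: "rank4_pencil omega B"
  shows "\<not> (B$0$4 = 0 \<and> B$1$4 = 0 \<and> B$2$4 = 0 \<and> B$3$4 = 0 \<and>
    B$0$5 = 0 \<and> B$1$5 = 0 \<and> B$2$5 = 0 \<and> B$3$5 = 0)"
proof
  assume z: "B$0$4 = 0 \<and> B$1$4 = 0 \<and> B$2$4 = 0 \<and> B$3$4 = 0 \<and>
    B$0$5 = 0 \<and> B$1$5 = 0 \<and> B$2$5 = 0 \<and> B$3$5 = 0"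
  note sk = rank4_pencil_skew[OF B]
  define p where "p = B$0$1 + B$2$3"
  define q where "q = B$0$1 * B$2$3 - B$0$2 * B$1$3 + B$0$3 * B$1$2"
  have block_pf: "pf4 (lin2 s omega 1 B) 0 1 2 3 = s\<^sup>2 + p * s + q" for s
    by (simp add: pf4_def omega_entry p_def q_def power2_eq_square algebra_simps)
  have pf: "B$4$5 * (s\<^sup>2 + p * s + q) = 0" for s
  proof -
    have "pf6 (lin2 s omega 1 B) = B$4$5 * (s\<^sup>2 + p * s + q)"
      by (simp add: pf6_def pf4_def omega_entry skew_lower_entries[OF sk] z p_def q_def
          power2_eq_square algebra_simps)
    then show ?thesis using rank4_pencil_pfaffian[OF B, of s 1] by simp
  qed
  have "2 * B$4$5 = B$4$5 * (2\<^sup>2 + p * 2 + q) - 2 * (B$4$5 * (1\<^sup>2 + p * 1 + q))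
      + B$4$5 * (0\<^sup>2 + p * 0 + q)"
    by (simp add: power2_eq_square algebra_simps)
  then have b45: "B$4$5 = 0" by (simp only: pf) simp
  obtain s where "s\<^sup>2 + p * s + q = 0" using complex_quadratic_has_root by blast
  then have "pf4 (lin2 s omega 1 B) 0 1 2 3 = 0" by (simp add: block_pf)
  moreover have "lin2 s omega 1 B $ k $ 4 = 0" "lin2 s omega 1 B $ k $ 5 = 0" for k
    using exhaust_6[of k] by (elim disjE; simp add: omega_entry skew_lower_entries[OF sk] z b45)+
  ultimately have "rank (lin2 s omega 1 B) \<le> 2"
    using rank_le_2_if_block_pfaffian_zero rank4_pencil_skew_lin2[OF B] by blast
  then show False using rank4_pencil_rank[OF B, of s 1] by simp
qed

lemma omega_pencil_pivot:
  assumes B: "rank4_pencil omega B"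
  obtains B' where "rank4_pencil omega B'" "gl_equivalent (pline omega B) (pline omega B')"
    "B'$0$4 \<noteq> 0"
proof -
  let ?P1 = "\<lambda>M::complex^6^6. M$0$4 \<noteq> 0 \<or> M$1$4 \<noteq> 0 \<or> M$2$4 \<noteq> 0 \<or> M$3$4 \<noteq> 0"
  have "?P1 B \<or> ?P1 (act (perm_matrix (Transposition.transpose 4 5)) B)"
    using rank4_pencil_coupling_nonzero[OF B] by (auto simp: act_perm_matrix)
  then obtain B1 where B1: "rank4_pencil omega B1" "gl_equivalent (pline omega B) (pline omega B1)"
      "?P1 B1"
    by (rule pencil_stabiliser_step_if[OF B stabilises_omega_swap_45, where P = ?P1])
  let ?P2 = "\<lambda>M::complex^6^6. M$0$4 \<noteq> 0 \<or> M$1$4 \<noteq> 0"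
  have "?P2 B1 \<or> ?P2 (act (perm_matrix (Transposition.transpose 0 2 \<circ> Transposition.transpose 1 3)) B1)"
    using B1(3) by (auto simp: act_perm_matrix)
  then obtain B2 where B2: "rank4_pencil omega B2" "gl_equivalent (pline omega B1) (pline omega B2)"
      "?P2 B2"
    by (rule pencil_stabiliser_step_if[OF B1(1) stabilises_omega_swap_planes, where P = ?P2])
  let ?P3 = "\<lambda>M::complex^6^6. M$0$4 \<noteq> 0"
  have "?P3 B2 \<or> ?P3 (act (dilation 1 (-1) ** perm_matrix (Transposition.transpose 0 1)) B2)"
    using B2(3) by (auto simp: act_elementary)
  then obtain B3 where B3: "rank4_pencil omega B3" "gl_equivalent (pline omega B2) (pline omega B3)"
      "?P3 B3"
    by (rule pencil_stabiliser_step_if[OF B2(1) stabilises_omega_signed_swap_01, where P = ?P3])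
  show thesis
    using that B3(1,3) B1(2) B2(2) B3(2) gl_equivalent_trans by blast
qed

lemma omega_pencil_column_4:
  assumes B: "rank4_pencil omega B" and B04: "B$0$4 \<noteq> 0"
  obtains B' where "rank4_pencil omega B'" "gl_equivalent (pline omega B) (pline omega B')"
    "B'$0$4 = 1" "B'$1$4 = 0" "B'$2$4 = 0" "B'$3$4 = 0" "B'$0$5 = 0"
proof -
  define B1 where "B1 = act (dilation 1 (B$0$4) ** dilation 0 (1 / B$0$4)) B"
  have B1: "rank4_pencil omega B1" "gl_equivalent (pline omega B) (pline omega B1)"
    unfolding B1_def using B04
    by (simp_all add: pencil_stabiliser_step[OF B] stabilises_omega_generators)
  have B1_04: "B1$0$4 = 1" unfolding B1_def using B04 by (simp add: act_elementary)
  define B2 where "B2 = act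
    ((transvection 1 2 (- B1$3$4) ** transvection 3 0 (- B1$3$4)) **
     (transvection 1 3 (B1$2$4) ** transvection 2 0 (- B1$2$4))) B1"
  have B2: "rank4_pencil omega B2" "gl_equivalent (pline omega B1) (pline omega B2)"
    unfolding B2_def
    by (simp_all add: pencil_stabiliser_step[OF B1(1)] stabilises_omega_mult stabilises_omega_generators)
  have B2_col: "B2$0$4 = 1" "B2$2$4 = 0" "B2$3$4 = 0"
    unfolding B2_def using B1_04
    by (simp_all add: act_elementary skew_lower_entries[OF rank4_pencil_skew[OF B1(1)]])
  define B3 where "B3 = act (transvection 1 0 (- B2$1$4) ** transvection 5 4 (- B2$0$5)) B2"
  have B3: "rank4_pencil omega B3" "gl_equivalent (pline omega B2) (pline omega B3)"
    unfolding B3_def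
    by (simp_all add: pencil_stabiliser_step[OF B2(1)] stabilises_omega_mult stabilises_omega_generators)
  have "B3$0$4 = 1" "B3$1$4 = 0" "B3$2$4 = 0" "B3$3$4 = 0" "B3$0$5 = 0"
    unfolding B3_def using B2_col
    by (simp_all add: act_elementary skew_lower_entries[OF rank4_pencil_skew[OF B2(1)]])
  then show thesis
    using that B3(1) B1(2) B2(2) B3(2) gl_equivalent_trans by blast
qed

lemma omega_pencil_column_5:
  assumes B: "rank4_pencil omega B"
    and col: "B$0$4 = 1" "B$1$4 = 0" "B$2$4 = 0" "B$3$4 = 0" "B$0$5 = 0"
  shows "B$1$5 = 0" "B$4$5 = 0"
proof -
  note sk = rank4_pencil_skew[OF B]
  have pf: "B$4$5 * s\<^sup>2 + (B$4$5 * (B$0$1 + B$2$3) - B$1$5) * s + pf6 B = 0" for s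
  proof -
    have "pf6 (lin2 s omega 1 B) = B$4$5 * s\<^sup>2 + (B$4$5 * (B$0$1 + B$2$3) - B$1$5) * s + pf6 B"
      by (simp add: pf6_def pf4_def omega_entry skew_lower_entries[OF sk] col
          power2_eq_square algebra_simps)
    then show ?thesis using rank4_pencil_pfaffian[OF B, of s 1] by simp
  qed
  let ?f = "\<lambda>s. B$4$5 * s\<^sup>2 + (B$4$5 * (B$0$1 + B$2$3) - B$1$5) * s + pf6 B"
  have "2 * B$4$5 = ?f 2 - 2 * ?f 1 + ?f 0"
    by (simp add: power2_eq_square algebra_simps)
  then have b45: "B$4$5 = 0" by (simp only: pf) simp
  have "B$1$5 = B$4$5 * (1 + B$0$1 + B$2$3) - (?f 1 - ?f 0)"
    by (simp add: power2_eq_square algebra_simps)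
  then show "B$1$5 = 0" by (simp only: pf) (simp add: b45)
  show "B$4$5 = 0" by (rule b45)
qed

lemma omega_pencil_generic_column_5:
  assumes B: "rank4_pencil omega B"
    and col: "B$0$4 = 1" "B$1$4 = 0" "B$2$4 = 0" "B$3$4 = 0" "B$0$5 = 0" "B$1$5 = 0" "B$4$5 = 0"
    and nz: "B$2$5 \<noteq> 0 \<or> B$3$5 \<noteq> 0"
  obtains B' where "rank4_pencil omega B'" "gl_equivalent (pline omega B) (pline omega B')"
    "B'$0$4 = 1" "B'$1$4 = 0" "B'$2$4 = 0" "B'$3$4 = 0" "B'$0$5 = 0" "B'$1$5 = 0" "B'$4$5 = 0"
    "B'$2$5 = 1" "B'$3$5 = 0"
proof -
  let ?P = "\<lambda>M::complex^6^6. M$0$4 = 1 \<and> M$1$4 = 0 \<and> M$2$4 = 0 \<and> M$3$4 = 0 \<and>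
    M$0$5 = 0 \<and> M$1$5 = 0 \<and> M$4$5 = 0 \<and> M$2$5 \<noteq> 0"
  have "?P B \<or> ?P (act (dilation 3 (-1) ** perm_matrix (Transposition.transpose 2 3)) B)"
    using col nz by (auto simp: act_elementary)
  then obtain B1 where B1: "rank4_pencil omega B1" "gl_equivalent (pline omega B) (pline omega B1)"
      "?P B1"
    by (rule pencil_stabiliser_step_if[OF B stabilises_omega_signed_swap_23, where P = ?P])
  define B2 where "B2 = act (dilation 3 (B1$2$5) ** dilation 2 (1 / B1$2$5)) B1"
  have B2: "rank4_pencil omega B2" "gl_equivalent (pline omega B1) (pline omega B2)"
    unfolding B2_def using B1(3)
    by (simp_all add: pencil_stabiliser_step[OF B1(1)] stabilises_omega_generators)
  have B2_entries: "B2$0$4 = 1" "B2$1$4 = 0" "B2$2$4 = 0" "B2$3$4 = 0" "B2$0$5 = 0"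
      "B2$1$5 = 0" "B2$4$5 = 0" "B2$2$5 = 1"
    unfolding B2_def using B1(3) by (simp_all add: act_elementary)
  define B3 where "B3 = act (transvection 3 2 (- B2$3$5)) B2"
  have B3: "rank4_pencil omega B3" "gl_equivalent (pline omega B2) (pline omega B3)"
    unfolding B3_def by (simp_all add: pencil_stabiliser_step[OF B2(1)] stabilises_omega_generators)
  have "B3$0$4 = 1" "B3$1$4 = 0" "B3$2$4 = 0" "B3$3$4 = 0" "B3$0$5 = 0"
      "B3$1$5 = 0" "B3$4$5 = 0" "B3$2$5 = 1" "B3$3$5 = 0"
    unfolding B3_def using B2_entries
    by (simp_all add: act_elementary skew_lower_entries[OF rank4_pencil_skew[OF B2(1)]])
  then show thesis using that B3(1) B1(2) B2(2) B3(2) gl_equivalent_trans by blast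
qed

lemma omega_pencil_generic:
  assumes B: "rank4_pencil omega B"
    and entries: "B$0$4 = 1" "B$1$4 = 0" "B$2$4 = 0" "B$3$4 = 0" "B$0$5 = 0" "B$1$5 = 0"
      "B$4$5 = 0" "B$2$5 = 1" "B$3$5 = 0"
  shows "gl_equivalent (pline omega B) (pline omega (wedge 0 4 + wedge 2 5))"
proof -
  \<comment> \<open>Each transvection changes only the entry it clears (and its mirror image), so all
    coefficients can be read off from \<open>B\<close>.\<close>
  define B' where "B' = act (transvection 1 4 (- B$0$1) ** transvection 2 4 (- B$0$2) **
    transvection 3 4 (- B$0$3) ** transvection 1 5 (B$1$2) ** transvection 3 5 (- B$2$3)) B"
  have B': "rank4_pencil omega B'" "gl_equivalent (pline omega B) (pline omega B')"
    unfolding B'_def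
    by (simp_all add: pencil_stabiliser_step[OF B] stabilises_omega_mult stabilises_omega_generators)
  note sk' = rank4_pencil_skew[OF B'(1)]
  have B'_entries: "B'$0$1 = 0" "B'$0$2 = 0" "B'$0$3 = 0" "B'$0$4 = 1" "B'$0$5 = 0"
      "B'$1$2 = 0" "B'$1$4 = 0" "B'$1$5 = 0" "B'$2$3 = 0" "B'$2$4 = 0" "B'$2$5 = 1"
      "B'$3$4 = 0" "B'$3$5 = 0" "B'$4$5 = 0"
    unfolding B'_def using entries
    by (simp_all add: act_elementary skew_lower_entries[OF rank4_pencil_skew[OF B]])
  have "pf6 B' = B'$1$3"
    by (simp add: pf6_def pf4_def B'_entries skew_lower_entries[OF sk'])
  then have "B'$1$3 = 0" using rank4_pencil_pfaffian[OF B'(1), of 0 1] by (simp add: lin2_0_1)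
  then have "B' = wedge 0 4 + wedge 2 5"
    unfolding matrix_eq_iff all_6 by (simp add: B'_entries skew_lower_entries[OF sk'] wedge_entry)
  then show ?thesis using B'(2) by simp
qed

lemma omega_pencil_special_row_0:
  assumes B: "rank4_pencil omega B"
    and col: "B$0$4 = 1" "B$1$4 = 0" "B$2$4 = 0" "B$3$4 = 0" "B$0$5 = 0" "B$1$5 = 0" "B$4$5 = 0"
      "B$2$5 = 0" "B$3$5 = 0"
  obtains B' where "rank4_pencil omega B'" "gl_equivalent (pline omega B) (pline omega B')"
    "B'$0$1 = 0" "B'$0$2 = 0" "B'$0$3 = 0" "B'$0$4 = 1" "B'$0$5 = 0"
    "B'$1$4 = 0" "B'$1$5 = 0" "B'$2$3 = 0" "B'$2$4 = 0" "B'$2$5 = 0"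
    "B'$3$4 = 0" "B'$3$5 = 0" "B'$4$5 = 0"
proof -
  define B1 where "B1 = lin2 (- B$2$3) omega 1 B"
  have B1: "rank4_pencil omega B1" unfolding B1_def by (rule rank4_pencil_shear[OF B])
  have B1_line: "pline omega B1 = pline omega B" unfolding B1_def by (rule pline_shear)
  have B1_entries: "B1$0$4 = 1" "B1$1$4 = 0" "B1$2$4 = 0" "B1$3$4 = 0" "B1$0$5 = 0"
      "B1$1$5 = 0" "B1$4$5 = 0" "B1$2$5 = 0" "B1$3$5 = 0" "B1$2$3 = 0"
    unfolding B1_def using col by (simp_all add: omega_entry)
  define B2 where "B2 = act (transvection 1 4 (- B1$0$1) ** transvection 2 4 (- B1$0$2) **
    transvection 3 4 (- B1$0$3)) B1"
  have B2: "rank4_pencil omega B2" "gl_equivalent (pline omega B1) (pline omega B2)"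
    unfolding B2_def
    by (simp_all add: pencil_stabiliser_step[OF B1] stabilises_omega_mult stabilises_omega_generators)
  have "B2$0$1 = 0" "B2$0$2 = 0" "B2$0$3 = 0" "B2$0$4 = 1" "B2$0$5 = 0"
      "B2$1$4 = 0" "B2$1$5 = 0" "B2$2$3 = 0" "B2$2$4 = 0" "B2$2$5 = 0"
      "B2$3$4 = 0" "B2$3$5 = 0" "B2$4$5 = 0"
    unfolding B2_def using B1_entries
    by (simp_all add: act_elementary skew_lower_entries[OF rank4_pencil_skew[OF B1]])
  then show thesis using that B2 B1_line by simp
qed

lemma omega_pencil_special:
  assumes B: "rank4_pencil omega B"
    and entries: "B$0$1 = 0" "B$0$2 = 0" "B$0$3 = 0" "B$0$4 = 1" "B$0$5 = 0"
      "B$1$4 = 0" "B$1$5 = 0" "B$2$3 = 0" "B$2$4 = 0" "B$2$5 = 0"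
      "B$3$4 = 0" "B$3$5 = 0" "B$4$5 = 0"
  shows "gl_equivalent (pline omega B) (pline omega (wedge 0 4 + wedge 2 1))"
proof -
  note sk = rank4_pencil_skew[OF B]
  have "B$1$2 \<noteq> 0 \<or> B$1$3 \<noteq> 0"
  proof (rule ccontr)
    assume "\<not> (B$1$2 \<noteq> 0 \<or> B$1$3 \<noteq> 0)"
    then have "B = wedge 0 4"
      unfolding matrix_eq_iff all_6 by (simp add: entries skew_lower_entries[OF sk] wedge_entry)
    then show False using rank4_pencil_rank[OF B, of 0 1] rank_wedge_le_2[of 0 4]
      by (simp add: lin2_0_1)
  qed
  let ?P = "\<lambda>M::complex^6^6. M$0$1 = 0 \<and> M$0$2 = 0 \<and> M$0$3 = 0 \<and> M$0$4 = 1 \<and> M$0$5 = 0 \<and>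
    M$1$4 = 0 \<and> M$1$5 = 0 \<and> M$2$3 = 0 \<and> M$2$4 = 0 \<and> M$2$5 = 0 \<and>
    M$3$4 = 0 \<and> M$3$5 = 0 \<and> M$4$5 = 0 \<and> M$1$2 \<noteq> 0"
  have "?P B \<or> ?P (act (transvection 2 3 1) B)"
    using \<open>B$1$2 \<noteq> 0 \<or> B$1$3 \<noteq> 0\<close>
    by (auto simp: act_elementary entries skew_lower_entries[OF sk])
  then obtain B1 where B1: "rank4_pencil omega B1" "gl_equivalent (pline omega B) (pline omega B1)"
      "?P B1"
    by (rule pencil_stabiliser_step_if[OF B stabilises_omega_transvection_23, where P = ?P])
  define B2 where "B2 = act ((dilation 3 (- B1$1$2) ** dilation 2 (1 / (- B1$1$2))) **
    transvection 3 2 (- B1$1$3 / B1$1$2)) B1"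
  have B2: "rank4_pencil omega B2" "gl_equivalent (pline omega B1) (pline omega B2)"
    unfolding B2_def using B1(3)
    by (intro pencil_stabiliser_step[OF B1(1)] stabilises_omega_generators stabilises_omega_mult;
        simp)+
  have B2_entries: "B2$0$1 = 0" "B2$0$2 = 0" "B2$0$3 = 0" "B2$0$4 = 1" "B2$0$5 = 0"
      "B2$1$2 = -1" "B2$1$3 = 0" "B2$1$4 = 0" "B2$1$5 = 0" "B2$2$3 = 0" "B2$2$4 = 0"
      "B2$2$5 = 0" "B2$3$4 = 0" "B2$3$5 = 0" "B2$4$5 = 0"
    unfolding B2_def using B1(3)
    by (simp_all add: act_elementary skew_lower_entries[OF rank4_pencil_skew[OF B1(1)]])
  have "B2 = wedge 0 4 + wedge 2 1"
    unfolding matrix_eq_iff all_6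
    by (simp add: B2_entries skew_lower_entries[OF rank4_pencil_skew[OF B2(1)]] wedge_entry)
  then show ?thesis using B1(2) B2(2) gl_equivalent_trans by metis
qed

lemma omega_pencil_normal_form:
  assumes B: "rank4_pencil omega B"
  shows "gl_equivalent (pline omega B) (pline omega (wedge 0 4 + wedge 2 5)) \<or>
    gl_equivalent (pline omega B) (pline omega (wedge 0 4 + wedge 2 1))"
proof -
  obtain B1 where B1: "rank4_pencil omega B1" "gl_equivalent (pline omega B) (pline omega B1)"
      "B1$0$4 \<noteq> 0"
    using omega_pencil_pivot[OF B] by blast
  obtain B2 where B2: "rank4_pencil omega B2" "gl_equivalent (pline omega B1) (pline omega B2)"
      "B2$0$4 = 1" "B2$1$4 = 0" "B2$2$4 = 0" "B2$3$4 = 0" "B2$0$5 = 0"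
    using omega_pencil_column_4[OF B1(1,3)] by blast
  note col = B2(3-7) omega_pencil_column_5[OF B2(1,3-7)]
  have "gl_equivalent (pline omega B2) (pline omega (wedge 0 4 + wedge 2 5)) \<or>
    gl_equivalent (pline omega B2) (pline omega (wedge 0 4 + wedge 2 1))"
  proof (cases "B2$2$5 = 0 \<and> B2$3$5 = 0")
    case True
    show ?thesis
    proof (rule omega_pencil_special_row_0[OF B2(1) col conjunct1[OF True] conjunct2[OF True]],
        goal_cases)
      case (1 B3)
      have "gl_equivalent (pline omega B3) (pline omega (wedge 0 4 + wedge 2 1))"
        using 1(1,3-15) by (rule omega_pencil_special)
      then show ?case using 1(2) gl_equivalent_trans by blast
    qed
  next
    case False
    then have nz: "B2$2$5 \<noteq> 0 \<or> B2$3$5 \<noteq> 0" by blast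
    show ?thesis
    proof (rule omega_pencil_generic_column_5[OF B2(1) col nz], goal_cases)
      case (1 B3)
      have "gl_equivalent (pline omega B3) (pline omega (wedge 0 4 + wedge 2 5))"
        using 1(1,3-11) by (rule omega_pencil_generic)
      then show ?case using 1(2) gl_equivalent_trans by blast
    qed
  qed
  then show ?thesis using B1(2) B2(2) gl_equivalent_trans by blast
qed

lemma gl_equivalent_standard_lines:
  "gl_equivalent (pline omega (wedge 0 4 + wedge 2 5))
     (pline (wedge 0 2 + wedge 1 3) (wedge 0 4 + wedge 1 5))"
  "gl_equivalent (pline omega (wedge 0 4 + wedge 2 1))
     (pline (wedge 0 2 + wedge 1 3) (wedge 0 4 + wedge 1 2))"
proof -
  let ?g = "perm_matrix (Transposition.transpose 1 2) :: complex^6^6"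
  have "act ?g omega = wedge 0 2 + wedge 1 3"
    "act ?g (wedge 0 4 + wedge 2 5) = wedge 0 4 + wedge 1 5"
    "act ?g (wedge 0 4 + wedge 2 1) = wedge 0 4 + wedge 1 2"
    unfolding matrix_eq_iff all_6 by (simp_all add: act_perm_matrix omega_entry wedge_entry)
  then show "gl_equivalent (pline omega (wedge 0 4 + wedge 2 5))
     (pline (wedge 0 2 + wedge 1 3) (wedge 0 4 + wedge 1 5))"
    "gl_equivalent (pline omega (wedge 0 4 + wedge 2 1))
     (pline (wedge 0 2 + wedge 1 3) (wedge 0 4 + wedge 1 2))"
    using gl_equivalent_act[OF invertible_perm_matrix[OF bij_transpose]] by metis+
qed

theorem mainTheorem2:
  fixes A B :: "complex^6^6"
  assumes "skew A" and "skew B"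
    and "\<forall>a b. lin2 a A b B = 0 \<longrightarrow> a = 0 \<and> b = 0"
    and "\<forall>a b. (a, b) \<noteq> (0, 0) \<longrightarrow> rank (lin2 a A b B) = 4"
  shows "\<exists>g :: complex^6^6. invertible g \<and>
    (act g ` pline A B = pline (wedge 0 2 + wedge 1 3) (wedge 0 4 + wedge 1 5) \<or>
     act g ` pline A B = pline (wedge 0 2 + wedge 1 3) (wedge 0 4 + wedge 1 2))"
proof -
  \<comment> \<open>The third hypothesis (independence of \<open>A\<close> and \<open>B\<close>) is implied by the fourth.\<close>
  have pencil: "rank4_pencil A B"
    using assms(1,2,4) unfolding rank4_pencil_def by blast
  have "rank A = 4" using rank4_pencil_rank[OF pencil, of 1 0] by (simp add: lin2_1_0)
  then obtain g where g: "invertible g" "act g A = omega"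
    using skew_rank4_congruent_omega[OF assms(1)] unfolding congruent_def by blast
  have to_omega: "gl_equivalent (pline A B) (pline omega (act g B))"
    using gl_equivalent_act[OF g(1), of A B] g(2) by simp
  have "rank4_pencil omega (act g B)"
    using rank4_pencil_act[OF g(1) pencil] g(2) by simp
  then have
    "gl_equivalent (pline A B) (pline (wedge 0 2 + wedge 1 3) (wedge 0 4 + wedge 1 5)) \<or>
     gl_equivalent (pline A B) (pline (wedge 0 2 + wedge 1 3) (wedge 0 4 + wedge 1 2))"
    using omega_pencil_normal_form to_omega gl_equivalent_standard_lines gl_equivalent_trans by blast
  then show ?thesis unfolding gl_equivalent_def by blast
qed

end
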